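(* Let $k\ge2$, $n\ge1$, $m=kn-1$, and let $\varphi\in C^\infty(\mathbb P_m\mathbb C)$ be $g$-admissible and $G_{n,k}$-invariant. Then for all real $0<\zeta_i\le1$ ($0\le i\le k-1$), $$(\varphi-\psi)([1,\zeta_0^{[n-1]},\zeta_1^{[n]},\dots,\zeta_{k-1}^{[n]}])\ge(\varphi-\psi)([1,\zeta_0^{[n-1]},\gamma^{[(k-1)n]}]),$$ where $\zeta^{[d]}=(\zeta,\dots,\zeta)\in\mathbb C^d$ and $\gamma=(\zeta_1\cdots\zeta_{k-1})^{1/(k-1)}$.
   Context: Homogeneous coordinates on $\mathbb P_m\mathbb C$, $m=kn-1$, are written $[z_0,\dots,z_m]=[Z_0,\dots,Z_{k-1}]$ with blocks $Z_h=(z_{hn},\dots,z_{(h+1)n-1})$. The metric $g$ has components $g_{\lambda\bar\mu}=a_m\,\partial^2\ln(1+|z_1|^2+\cdots+|z_m|^2)/\partial z_\lambda\partial\bar z_\mu$ in the chart $\{z_0=1\}$, for a fixed $a_m>0$. $\varphi$ is $g$-admissible if $g_{\lambda\bar\mu}+\partial^2\varphi/\partial z_\lambda\partial\bar z_\mu$ is positive definite everywhere. $G_{n,k}$ is the automorphism group generated by swaps of two blocks $Z_i,Z_j$, multiplication of a single coordinate $z_p$ by $e^{i\theta}$, and transpositions of two coordinates in the same block. $\psi([z_0,\dots,z_m])=\ln\big((|z_0|\cdots|z_m|)^{2a_m/(m+1)}/(|z_0|^2+\cdots+|z_m|^2)^{a_m}\big)$, defined where all $z_p\ne0$. *)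

theory Defs
  imports "HOL-Analysis.Analysis"
begin

text \<open>C-infinity smoothness on an open set: differentiable, and every
  directional derivative is again smooth (coinductively).\<close>
coinductive smooth_on :: "'a::real_normed_vector set \<Rightarrow> ('a \<Rightarrow> real) \<Rightarrow> bool" where
  "open S \<Longrightarrow> f differentiable_on S \<Longrightarrow>
   (\<forall>u. smooth_on S (\<lambda>z. frechet_derivative f (at z) u)) \<Longrightarrow> smooth_on S f"

definition dird :: "'a::real_normed_vector \<Rightarrow> ('a \<Rightarrow> real) \<Rightarrow> 'a \<Rightarrow> real" where
  "dird u f z = frechet_derivative f (at z) u"

text \<open>Wirtinger second derivative  d^2 f / dz_l d(conj z_m).\<close>
definition wirt2 :: "(complex^'i \<Rightarrow> real) \<Rightarrow> 'i \<Rightarrow> 'i \<Rightarrow> complex^'i \<Rightarrow> complex" where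
  "wirt2 f l m z =
     (let X = (\<lambda>q. axis q (1::complex)); Y = (\<lambda>q. axis q \<i>);
          D2 = (\<lambda>a b. complex_of_real (dird a (dird b f) z))
      in (D2 (X l) (X m) + \<i> * D2 (X l) (Y m) - \<i> * D2 (Y l) (X m) + D2 (Y l) (Y m)) / 4)"

definition pos_def_herm :: "nat set \<Rightarrow> (nat \<Rightarrow> nat \<Rightarrow> complex) \<Rightarrow> bool" where
  "pos_def_herm I H \<longleftrightarrow> (\<forall>l\<in>I. \<forall>m\<in>I. H l m = cnj (H m l)) \<and>
     (\<forall>v. (\<exists>l\<in>I. v l \<noteq> 0) \<longrightarrow> Re (\<Sum>l\<in>I. \<Sum>m\<in>I. H l m * v l * cnj (v m)) > 0)"

text \<open>Homogeneous coordinates z_0..z_{N-1}; idx is the bijection from {..<N} onto the index type.\<close>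
definition coord :: "(nat \<Rightarrow> 'i) \<Rightarrow> nat \<Rightarrow> complex^'i \<Rightarrow> nat \<Rightarrow> complex" where
  "coord idx N z p = z $ idx p"

definition mk_point :: "(nat \<Rightarrow> 'i) \<Rightarrow> nat \<Rightarrow> (nat \<Rightarrow> complex) \<Rightarrow> complex^'i" where
  "mk_point idx N c = (\<chi> q. c (the_inv_into {..<N} idx q))"

definition logsq :: "complex^'i \<Rightarrow> real" where
  "logsq z = ln (\<Sum>q\<in>UNIV. (cmod (z $ q))^2)"

text \<open>g-admissibility of phi (given by its scale-invariant lift Phi), checked in every
  standard affine chart {z_j = 1}, in the affine coordinates z_p, p \<noteq> j.\<close>
definition admissible :: "real \<Rightarrow> (nat \<Rightarrow> 'i) \<Rightarrow> nat \<Rightarrow> (complex^'i \<Rightarrow> real) \<Rightarrow> bool" where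
  "admissible a idx N Phi \<longleftrightarrow>
     (\<forall>j<N. \<forall>z. z $ idx j = 1 \<longrightarrow>
        pos_def_herm ({..<N} - {j})
          (\<lambda>l m. complex_of_real a * wirt2 logsq (idx l) (idx m) z + wirt2 Phi (idx l) (idx m) z))"

definition perm_pt :: "(nat \<Rightarrow> 'i) \<Rightarrow> nat \<Rightarrow> (nat \<Rightarrow> nat) \<Rightarrow> complex^'i \<Rightarrow> complex^'i" where
  "perm_pt idx N \<sigma> z = mk_point idx N (\<lambda>p. coord idx N z (\<sigma> p))"

definition swap_idx :: "nat \<Rightarrow> nat \<Rightarrow> nat \<Rightarrow> nat" where
  "swap_idx p q r = (if r = p then q else if r = q then p else r)"

definition block_swap :: "nat \<Rightarrow> nat \<Rightarrow> nat \<Rightarrow> nat \<Rightarrow> nat" where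
  "block_swap n i j p = (if p div n = i then j * n + p mod n
                         else if p div n = j then i * n + p mod n else p)"

definition phase_pt :: "(nat \<Rightarrow> 'i) \<Rightarrow> nat \<Rightarrow> real \<Rightarrow> complex^'i \<Rightarrow> complex^'i" where
  "phase_pt idx p \<theta> z = (\<chi> q. if q = idx p then cis \<theta> * z $ q else z $ q)"

definition psi :: "real \<Rightarrow> complex^'i \<Rightarrow> real" where
  "psi a z = ln ((\<Prod>q\<in>UNIV. cmod (z $ q)) powr (2 * a / real CARD('i))
                 / (\<Sum>q\<in>UNIV. (cmod (z $ q))^2) powr a)"

end

theory Submission
  imports Defs
begin

text \<open>
  Let \<open>b\<close> be the coordinates of the point \<open>P2\<close>, let \<open>c\<^sub>p = ln (\<zeta>\<^sub>i / \<gamma>)\<close> for \<open>p\<close> in block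
  \<open>i \<ge> 1\<close> and \<open>c\<^sub>p = 0\<close> on block 0, and follow the path \<open>W(s) = (e\<^bsup>s c\<^sub>p\<^esup> b\<^sub>p)\<^sub>p\<close>, so that
  \<open>W(0) = P2\<close> and \<open>W(1) = P1\<close>. As \<open>\<Sum>\<^sub>p c\<^sub>p = 0\<close>, the product of the \<open>|z\<^sub>p|\<close> is constant along
  \<open>W\<close>, so there \<open>\<phi> - \<psi>\<close> differs by a constant from \<open>F = \<phi> + a ln |z|\<^sup>2\<close>.
  By phase invariance \<open>F\<close> is constant along \<open>\<tau> \<mapsto> (e\<^bsup>(s + i\<tau>) c\<^sub>p\<^esup> b\<^sub>p)\<^sub>p\<close>, so the second
  derivative of \<open>F \<circ> W\<close> equals the Laplacian in \<open>s + i\<tau>\<close>, i.e. four times the complex Hessian of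
  \<open>F\<close> on the real vector \<open>(c\<^sub>p W\<^sub>p)\<^sub>p\<close>; admissibility in the chart \<open>z\<^sub>0 = 1\<close>, where
  \<open>c\<^sub>0 = 0\<close>, makes it nonnegative. At \<open>s = 0\<close> the point is invariant under the swaps of the blocks
  \<open>1, \<dots>, k - 1\<close>, and \<open>c\<close> is a combination of their indicators with coefficients summing to 0,
  so \<open>(F \<circ> W)'(0) = 0\<close>. A convex function with a critical point at 0 is nondecreasing on
  \<open>[0, \<infinity>)\<close>.
\<close>

lemma sum_lessThan_mult_div:
  fixes f :: "nat \<Rightarrow> 'a::comm_semiring_1"
  shows "(\<Sum>p<k*n. f (p div n)) = of_nat n * (\<Sum>i<k. f i)"
proof (cases "n = 0")
  case False
  have "(\<Sum>p<k*n. f (p div n)) = (\<Sum>i<k. \<Sum>p\<in>{i*n..<i*n+n}. f (p div n))"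
    by (rule sum.nat_group[symmetric])
  also have "\<dots> = (\<Sum>i<k. of_nat n * f i)"
  proof (rule sum.cong[OF refl])
    fix i
    have "p div n = i" if "p \<in> {i*n..<i*n+n}" for p
      using that by (intro div_nat_eqI) (auto simp: mult.commute)
    then show "(\<Sum>p\<in>{i*n..<i*n+n}. f (p div n)) = of_nat n * f i"
      by simp
  qed
  finally show ?thesis
    by (simp add: sum_distrib_left)
qed simp

lemma sum_outside_first_block:
  fixes d :: "nat \<Rightarrow> 'a::comm_semiring_1"
  assumes n: "0 < n" and k: "0 < k"
  shows "(\<Sum>p<k*n. if p < n then 0 else d (p div n)) = of_nat n * (\<Sum>i\<in>{1..<k}. d i)"
proof -
  have "(\<Sum>p<k*n. if p < n then 0 else d (p div n)) = (\<Sum>p<k*n. if p div n = 0 then 0 else d (p div n))"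
    using n by (intro sum.cong) (auto simp: div_eq_0_iff)
  also have "\<dots> = of_nat n * (\<Sum>i<k. if i = 0 then 0 else d i)"
    by (rule sum_lessThan_mult_div)
  also have "(\<Sum>i<k. if i = 0 then 0 else d i) = (\<Sum>i\<in>{1..<k}. d i)"
    using k by (auto simp: lessThan_atLeast0 sum.atLeast_Suc_lessThan intro!: sum.cong)
  finally show ?thesis .
qed

lemma sum_ln_minus_ln_geometric_mean:
  fixes x :: "'a \<Rightarrow> real"
  assumes A: "finite A" "A \<noteq> {}" and x: "\<And>i. i \<in> A \<Longrightarrow> 0 < x i"
  shows "(\<Sum>i\<in>A. ln (x i) - ln ((\<Prod>i\<in>A. x i) powr (1 / card A))) = 0"
proof -
  have "ln ((\<Prod>i\<in>A. x i) powr (1 / card A)) = (\<Sum>i\<in>A. ln (x i)) / card A"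
    using A x by (simp add: ln_powr prod_pos less_imp_le ln_prod less_imp_neq[symmetric])
  then show ?thesis
    using A by (simp add: sum_subtractf)
qed

lemma nondecreasing_from_critical_point:
  fixes g :: "real \<Rightarrow> real"
  assumes g: "\<And>t. (g has_real_derivative g' t) (at t)" and g': "\<And>t. (g' has_real_derivative g'' t) (at t)"
    and g'': "\<And>t. 0 \<le> g'' t" and crit: "g' 0 = 0" and s: "0 \<le> s"
  shows "g 0 \<le> g s"
proof (rule DERIV_nonneg_imp_nondecreasing[OF s])
  fix t :: real assume "0 \<le> t"
  then have "g' 0 \<le> g' t"
    by (rule DERIV_nonneg_imp_nondecreasing) (use g' g'' in blast)
  with g crit show "\<exists>y. (g has_real_derivative y) (at t) \<and> 0 \<le> y" by auto
qed

section \<open>Second derivatives along curves\<close>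

definition twice_differentiable_on :: "('a::real_normed_vector \<Rightarrow> real) \<Rightarrow> 'a set \<Rightarrow> bool" where
  "twice_differentiable_on f U \<longleftrightarrow>
     (\<forall>z\<in>U. f differentiable (at z) \<and> (\<forall>u. (\<lambda>w. frechet_derivative f (at w) u) differentiable (at z)))"

lemma smooth_on_imp_twice_differentiable_on:
  assumes "smooth_on S f"
  shows "twice_differentiable_on f S"
proof -
  from assms have S: "open S" and f: "f differentiable_on S"
    and Df: "\<And>u. smooth_on S (\<lambda>z. frechet_derivative f (at z) u)"
    by (auto elim: smooth_on.cases)
  have "(\<lambda>z. frechet_derivative f (at z) u) differentiable_on S" for u
    using Df[of u] by (auto elim: smooth_on.cases)
  with f S show ?thesis
    by (auto simp: twice_differentiable_on_def differentiable_on_eq_differentiable_at)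
qed

lemma linear_eq_sum_axis:
  fixes L :: "complex^'i::finite \<Rightarrow> real"
  assumes "linear L"
  shows "L v = (\<Sum>q\<in>UNIV. Re (v$q) * L (axis q 1) + Im (v$q) * L (axis q \<i>))"
proof -
  have "(Re (v$q) *\<^sub>R axis q 1 + Im (v$q) *\<^sub>R axis q \<i>) $ r = (if q = r then v$r else 0)" for q r
    by (auto simp: axis_def complex_eq_iff)
  then have "v = (\<Sum>q\<in>UNIV. Re (v$q) *\<^sub>R axis q 1 + Im (v$q) *\<^sub>R axis q \<i>)"
    unfolding vec_eq_iff sum_component by simp
  then have "L v = L (\<Sum>q\<in>UNIV. Re (v$q) *\<^sub>R axis q 1 + Im (v$q) *\<^sub>R axis q \<i>)"
    by (rule arg_cong)
  also have "\<dots> = (\<Sum>q\<in>UNIV. L (Re (v$q) *\<^sub>R axis q 1 + Im (v$q) *\<^sub>R axis q \<i>))"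
    using assms by (simp add: real_vector.linear_sum)
  finally show ?thesis
    using assms by (simp add: real_vector.linear_add linear_cmul)
qed

lemma has_real_derivative_comp_curve:
  fixes f :: "'a::real_normed_vector \<Rightarrow> real"
  assumes f: "f differentiable (at (\<gamma> t))" and \<gamma>: "(\<gamma> has_vector_derivative v) (at t)"
  shows "((\<lambda>t. f (\<gamma> t)) has_real_derivative frechet_derivative f (at (\<gamma> t)) v) (at t)"
proof -
  have "(f \<circ> \<gamma> has_derivative frechet_derivative f (at (\<gamma> t)) \<circ> (\<lambda>h. h *\<^sub>R v)) (at t)"
    using diff_chain_at[OF \<gamma>[unfolded has_vector_derivative_def] f[unfolded frechet_derivative_works]] .
  moreover have "frechet_derivative f (at (\<gamma> t)) \<circ> (\<lambda>h. h *\<^sub>R v) = (*) (frechet_derivative f (at (\<gamma> t)) v)"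
    using linear_frechet_derivative[OF f] by (auto simp: linear_cmul)
  ultimately show ?thesis by (simp add: has_field_derivative_def o_def)
qed

lemma has_vector_derivative_vec_lambda:
  fixes F :: "real \<Rightarrow> 'i::finite \<Rightarrow> 'a::real_normed_vector"
  assumes "\<And>q. ((\<lambda>s. F s q) has_vector_derivative F' q) (at t)"
  shows "((\<lambda>s. \<chi> q. F s q) has_vector_derivative (\<chi> q. F' q)) (at t)"
proof -
  have axis: "bounded_linear (axis q :: 'a \<Rightarrow> 'a^'i)" for q
  proof (rule bounded_linear_intro[where K=1])
    show "norm (axis q x) \<le> norm x * 1" for x :: 'a
      using L2_set_le_sum[of UNIV "\<lambda>i. norm (axis q x $ i)"]
      by (simp add: norm_vec_def axis_def if_distrib cong: if_cong)
  qed (simp_all add: axis_def vec_eq_iff)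
  have sum_axis: "(\<chi> q. G q) = (\<Sum>q\<in>UNIV. axis q (G q))" for G :: "'i \<Rightarrow> 'a"
    by (simp add: vec_eq_iff sum_component axis_def)
  show ?thesis
    unfolding sum_axis
    by (intro has_vector_derivative_sum bounded_linear.has_vector_derivative[OF axis] assms)
qed

lemma has_real_derivative_component:
  fixes \<gamma> :: "real \<Rightarrow> complex^'i::finite"
  assumes "(\<gamma> has_vector_derivative v) (at t)"
  shows "((\<lambda>t. Re (\<gamma> t $ q)) has_real_derivative Re (v $ q)) (at t)"
    and "((\<lambda>t. Im (\<gamma> t $ q)) has_real_derivative Im (v $ q)) (at t)"
  using bounded_linear.has_vector_derivative[OF
      bounded_linear_compose[OF bounded_linear_Re bounded_linear_vec_nth] assms]
    bounded_linear.has_vector_derivative[OF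
      bounded_linear_compose[OF bounded_linear_Im bounded_linear_vec_nth] assms]
  by (simp_all add: has_real_derivative_iff_has_vector_derivative)

text \<open>The real Hessian form \<open>D\<^sup>2f(z)(u, u)\<close>; expanding the inner direction in coordinates
  only needs the partial derivatives of \<open>f\<close> to be differentiable at \<open>z\<close>.\<close>

definition hess_form :: "(complex^'i::finite \<Rightarrow> real) \<Rightarrow> complex^'i \<Rightarrow> complex^'i \<Rightarrow> real" where
  "hess_form f z u =
     (\<Sum>q\<in>UNIV. Re (u$q) * dird u (dird (axis q 1) f) z + Im (u$q) * dird u (dird (axis q \<i>) f) z)"

lemma frechet_derivative_along_curve_has_real_derivative:
  fixes f :: "complex^'i::finite \<Rightarrow> real"
  assumes f: "twice_differentiable_on f U" and inU: "\<And>t. \<gamma> t \<in> U"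
    and \<gamma>: "\<And>t. (\<gamma> has_vector_derivative \<gamma>' t) (at t)"
    and \<gamma>': "(\<gamma>' has_vector_derivative \<gamma>'') (at t)"
  shows "((\<lambda>t. frechet_derivative f (at (\<gamma> t)) (\<gamma>' t)) has_real_derivative
           frechet_derivative f (at (\<gamma> t)) \<gamma>'' + hess_form f (\<gamma> t) (\<gamma>' t)) (at t)"
proof -
  define X where "X q = dird (axis q 1) f" for q
  define Y where "Y q = dird (axis q \<i>) f" for q
  have fd: "f differentiable (at (\<gamma> s))" for s
    using f inU by (simp add: twice_differentiable_on_def)
  have XY: "X q differentiable (at (\<gamma> t))" "Y q differentiable (at (\<gamma> t))" for q
    using f inU[of t] by (auto simp: twice_differentiable_on_def X_def Y_def dird_def[abs_def])
  have expand: "frechet_derivative f (at (\<gamma> s)) v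
      = (\<Sum>q\<in>UNIV. Re (v$q) * X q (\<gamma> s) + Im (v$q) * Y q (\<gamma> s))" for s v
    using linear_eq_sum_axis[OF linear_frechet_derivative[OF fd], where v=v] by (simp add: X_def Y_def dird_def)
  have chain: "((\<lambda>t. h (\<gamma> t)) has_real_derivative dird (\<gamma>' t) h (\<gamma> t)) (at t)"
    if "h differentiable (at (\<gamma> t))" for h
    unfolding dird_def by (rule has_real_derivative_comp_curve[OF that \<gamma>])
  have "((\<lambda>t. Re (\<gamma>' t$q) * X q (\<gamma> t) + Im (\<gamma>' t$q) * Y q (\<gamma> t)) has_real_derivative
      (Re (\<gamma>''$q) * X q (\<gamma> t) + dird (\<gamma>' t) (X q) (\<gamma> t) * Re (\<gamma>' t$q))
      + (Im (\<gamma>''$q) * Y q (\<gamma> t) + dird (\<gamma>' t) (Y q) (\<gamma> t) * Im (\<gamma>' t$q))) (at t)" for q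
    by (intro DERIV_add DERIV_mult has_real_derivative_component[OF \<gamma>'] chain XY)
  then have "((\<lambda>t. \<Sum>q\<in>UNIV. Re (\<gamma>' t$q) * X q (\<gamma> t) + Im (\<gamma>' t$q) * Y q (\<gamma> t)) has_real_derivative
      (\<Sum>q\<in>UNIV. (Re (\<gamma>''$q) * X q (\<gamma> t) + dird (\<gamma>' t) (X q) (\<gamma> t) * Re (\<gamma>' t$q))
                 + (Im (\<gamma>''$q) * Y q (\<gamma> t) + dird (\<gamma>' t) (Y q) (\<gamma> t) * Im (\<gamma>' t$q)))) (at t)"
    by (rule DERIV_sum)
  then show ?thesis
    unfolding expand by (simp add: hess_form_def X_def Y_def sum.distrib algebra_simps)
qed

section \<open>Phase invariance and the radial path\<close>

definition radial_path :: "('i \<Rightarrow> real) \<Rightarrow> ('i \<Rightarrow> real) \<Rightarrow> real \<Rightarrow> complex^'i" where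
  "radial_path \<beta> c s = (\<chi> q. complex_of_real (exp (s * c q) * \<beta> q))"

definition phase_path :: "('i \<Rightarrow> real) \<Rightarrow> complex^'i \<Rightarrow> real \<Rightarrow> complex^'i" where
  "phase_path c w \<tau> = (\<chi> q. cis (\<tau> * c q) * w $ q)"

definition phase_invariant :: "(complex^'i \<Rightarrow> real) \<Rightarrow> bool" where
  "phase_invariant f \<longleftrightarrow> (\<forall>\<theta> z. f (\<chi> q. cis (\<theta> q) * z $ q) = f z)"

lemma radial_path_0 [simp]: "radial_path \<beta> c 0 = (\<chi> q. complex_of_real (\<beta> q))"
  by (simp add: radial_path_def)

lemma radial_path_eq_0_iff: "radial_path \<beta> c s = 0 \<longleftrightarrow> (\<forall>q. \<beta> q = 0)"
  by (simp add: radial_path_def vec_eq_iff fun_eq_iff)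

lemma has_vector_derivative_radial_path:
  "(radial_path \<beta> c has_vector_derivative radial_path (\<lambda>q. c q * \<beta> q) c s) (at s)"
  unfolding radial_path_def
  by (rule has_vector_derivative_vec_lambda, rule has_vector_derivative_of_real)
     (auto intro!: derivative_eq_intros)

lemma has_vector_derivative_phase_path:
  "(phase_path c w has_vector_derivative phase_path c (\<chi> q. \<i> * of_real (c q) * w $ q) \<tau>) (at \<tau>)"
proof -
  have "((\<lambda>z. exp (\<i> * z * of_real (c q)) * w $ q) has_field_derivative
          exp (\<i> * of_real \<tau> * of_real (c q)) * (\<i> * of_real (c q) * w $ q)) (at (of_real \<tau>))" for q
    by (auto intro!: derivative_eq_intros simp: algebra_simps)
  from has_vector_derivative_real_field[OF this] show ?thesis
    unfolding phase_path_def
    by (intro has_vector_derivative_vec_lambda) (simp add: cis_conv_exp mult.assoc)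
qed

text \<open>\<open>f\<close> is constant along the orbit \<open>\<tau> \<mapsto> (e\<^bsup>i \<tau> c\<^sub>q\<^esup> w\<^sub>q)\<^sub>q\<close>, so its second derivative
  there vanishes: the Hessian in the rotated direction cancels the centripetal acceleration.\<close>

lemma phase_invariant_hess_form:
  fixes f :: "complex^'i::finite \<Rightarrow> real"
  assumes f: "twice_differentiable_on f (UNIV - {0})" and ph: "phase_invariant f" and w: "w \<noteq> 0"
  shows "hess_form f w (\<chi> q. \<i> * of_real (c q) * w $ q)
       = frechet_derivative f (at w) (\<chi> q. of_real (c q ^ 2) * w $ q)"
proof -
  define \<delta> where "\<delta> = phase_path c w"
  define \<delta>' where "\<delta>' = phase_path c (\<chi> q. \<i> * of_real (c q) * w $ q)"
  have \<delta>: "(\<delta> has_vector_derivative \<delta>' t) (at t)" for t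
    unfolding \<delta>_def \<delta>'_def by (rule has_vector_derivative_phase_path)
  have \<delta>_nz: "\<delta> t \<in> UNIV - {0}" for t
    using w by (simp add: \<delta>_def phase_path_def vec_eq_iff)
  have "phase_path c (\<chi> q. \<i> * of_real (c q) * (\<chi> q. \<i> * of_real (c q) * w $ q) $ q) 0
      = - (\<chi> q. of_real (c q ^ 2) * w $ q)"
    by (simp add: phase_path_def vec_eq_iff power2_eq_square algebra_simps)
  then have \<delta>': "(\<delta>' has_vector_derivative - (\<chi> q. of_real (c q ^ 2) * w $ q)) (at 0)"
    using has_vector_derivative_phase_path[of c "\<chi> q. \<i> * of_real (c q) * w $ q" 0]
    by (simp only: \<delta>'_def)
  have "frechet_derivative f (at (\<delta> t)) (\<delta>' t) = 0" for t
  proof (rule DERIV_unique)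
    show "((\<lambda>t. f (\<delta> t)) has_real_derivative frechet_derivative f (at (\<delta> t)) (\<delta>' t)) (at t)"
      using f \<delta>_nz by (intro has_real_derivative_comp_curve \<delta>) (simp add: twice_differentiable_on_def)
    show "((\<lambda>t. f (\<delta> t)) has_real_derivative 0) (at t)"
      using ph by (simp add: \<delta>_def phase_path_def phase_invariant_def)
  qed
  then have "((\<lambda>t. frechet_derivative f (at (\<delta> t)) (\<delta>' t)) has_real_derivative 0) (at 0)"
    by simp
  then have "0 = frechet_derivative f (at (\<delta> 0)) (- (\<chi> q. of_real (c q ^ 2) * w $ q))
      + hess_form f (\<delta> 0) (\<delta>' 0)"
    by (rule DERIV_unique[OF _ frechet_derivative_along_curve_has_real_derivative[OF f \<delta>_nz \<delta> \<delta>']])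
  moreover have "\<delta> 0 = w" "\<delta>' 0 = (\<chi> q. \<i> * of_real (c q) * w $ q)"
    by (simp_all add: \<delta>_def \<delta>'_def phase_path_def vec_eq_iff)
  moreover have "linear (frechet_derivative f (at w))"
    using f w by (intro linear_frechet_derivative) (simp add: twice_differentiable_on_def)
  ultimately show ?thesis
    by (simp add: real_vector.linear_neg)
qed

lemma hess_form_add_rotated:
  fixes f :: "complex^'i::finite \<Rightarrow> real"
  assumes f: "twice_differentiable_on f U" and z: "z \<in> U" and u: "\<And>q. Im (u $ q) = 0"
  shows "hess_form f z u + hess_form f z (\<chi> q. \<i> * u $ q)
       = 4 * (\<Sum>q\<in>UNIV. \<Sum>r\<in>UNIV. Re (u$q) * Re (u$r) * Re (wirt2 f r q z))"
proof -
  have lin: "linear (frechet_derivative (dird v f) (at z))" for v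
    using f z by (intro linear_frechet_derivative) (simp add: twice_differentiable_on_def dird_def[abs_def])
  have "hess_form f z u = (\<Sum>q\<in>UNIV. \<Sum>r\<in>UNIV. Re (u$q) * Re (u$r) * dird (axis r 1) (dird (axis q 1) f) z)"
    unfolding hess_form_def dird_def[of u] linear_eq_sum_axis[OF lin, where v=u]
    by (simp add: u dird_def sum_distrib_left mult.assoc)
  moreover have "hess_form f z (\<chi> q. \<i> * u $ q)
      = (\<Sum>q\<in>UNIV. \<Sum>r\<in>UNIV. Re (u$q) * Re (u$r) * dird (axis r \<i>) (dird (axis q \<i>) f) z)"
    unfolding hess_form_def dird_def[of "\<chi> q. \<i> * u $ q"] linear_eq_sum_axis[OF lin, where v="\<chi> q. \<i> * u $ q"]
    by (simp add: u dird_def sum_distrib_left mult.assoc)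
  moreover have "4 * Re (wirt2 f r q z)
      = dird (axis r 1) (dird (axis q 1) f) z + dird (axis r \<i>) (dird (axis q \<i>) f) z" for r q
    by (simp add: wirt2_def Let_def)
  ultimately show ?thesis
    by (simp add: sum_distrib_left sum.distrib[symmetric] algebra_simps)
qed

lemma radial_path_second_derivative:
  fixes f :: "complex^'i::finite \<Rightarrow> real"
  assumes f: "twice_differentiable_on f (UNIV - {0})" and ph: "phase_invariant f" and \<beta>: "\<exists>q. \<beta> q \<noteq> 0"
  shows "((\<lambda>s. frechet_derivative f (at (radial_path \<beta> c s)) (radial_path (\<lambda>q. c q * \<beta> q) c s))
           has_real_derivative 4 * (\<Sum>q\<in>UNIV. \<Sum>r\<in>UNIV. (exp (s * c q) * (c q * \<beta> q)) *
               (exp (s * c r) * (c r * \<beta> r)) * Re (wirt2 f r q (radial_path \<beta> c s)))) (at s)"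
proof -
  define W where "W = radial_path \<beta> c s"
  define V where "V = radial_path (\<lambda>q. c q * \<beta> q) c s"
  have W: "W \<in> UNIV - {0}" and nz: "\<And>t. radial_path \<beta> c t \<in> UNIV - {0}"
    using \<beta> by (simp_all add: W_def radial_path_eq_0_iff)
  have "((\<lambda>s. frechet_derivative f (at (radial_path \<beta> c s)) (radial_path (\<lambda>q. c q * \<beta> q) c s))
      has_real_derivative frechet_derivative f (at W) (\<chi> q. of_real (c q ^ 2) * W $ q) + hess_form f W V) (at s)"
    using frechet_derivative_along_curve_has_real_derivative[OF f nz has_vector_derivative_radial_path
        has_vector_derivative_radial_path]
    by (simp add: W_def V_def radial_path_def power2_eq_square mult_ac)
  moreover have "frechet_derivative f (at W) (\<chi> q. of_real (c q ^ 2) * W $ q) = hess_form f W (\<chi> q. \<i> * V $ q)"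
    using phase_invariant_hess_form[OF f ph, of W c] W
    by (simp add: W_def V_def radial_path_def mult_ac)
  moreover have "hess_form f W V + hess_form f W (\<chi> q. \<i> * V $ q)
      = 4 * (\<Sum>q\<in>UNIV. \<Sum>r\<in>UNIV. Re (V$q) * Re (V$r) * Re (wirt2 f r q W))"
    by (rule hess_form_add_rotated[OF f W]) (simp add: V_def radial_path_def)
  ultimately show ?thesis
    by (simp add: W_def V_def radial_path_def add.commute)
qed

lemma logsq_has_derivative:
  fixes z :: "complex^'i::finite"
  assumes "z \<noteq> 0"
  shows "(logsq has_derivative (\<lambda>h. (h \<bullet> z + z \<bullet> h) / (z \<bullet> z))) (at z)"
proof -
  have "logsq = (\<lambda>z::complex^'i. ln (z \<bullet> z))"
    by (simp add: fun_eq_iff logsq_def inner_vec_def power2_norm_eq_inner)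
  moreover have "((\<lambda>z. z \<bullet> z) has_derivative (\<lambda>h. h \<bullet> z + z \<bullet> h)) (at z)"
    by (auto intro!: derivative_eq_intros)
  moreover have "(ln has_derivative (\<lambda>h. h * inverse (z \<bullet> z))) (at (z \<bullet> z))"
    using DERIV_ln[of "z \<bullet> z"] assms by (simp add: has_field_derivative_def mult_commute_abs)
  ultimately show ?thesis
    using diff_chain_at by (fastforce simp: o_def divide_inverse)
qed

lemma twice_differentiable_logsq: "twice_differentiable_on (logsq :: complex^'i::finite \<Rightarrow> real) (UNIV - {0})"
  unfolding twice_differentiable_on_def
proof (intro ballI conjI allI)
  fix z u :: "complex^'i" assume z: "z \<in> UNIV - {0}"
  then show "logsq differentiable (at z)"
    using logsq_has_derivative differentiableI by blast
  have eq: "(u \<bullet> w + w \<bullet> u) / (w \<bullet> w) = frechet_derivative logsq (at w) u" if "w \<in> UNIV - {0}" for w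
    using that fun_cong[OF frechet_derivative_at[OF logsq_has_derivative], of w u] by simp
  have "(\<lambda>w. (u \<bullet> w + w \<bullet> u) / (w \<bullet> w)) differentiable (at z)"
    using z by (simp add: derivative_intros)
  then obtain D where "((\<lambda>w. (u \<bullet> w + w \<bullet> u) / (w \<bullet> w)) has_derivative D) (at z)"
    by (auto simp: differentiable_def)
  then have "((\<lambda>w. frechet_derivative logsq (at w) u) has_derivative D) (at z)"
    by (rule has_derivative_transform_within_open[OF _ _ z eq]) auto
  then show "(\<lambda>w. frechet_derivative logsq (at w) u) differentiable (at z)"
    using differentiableI by blast
qed

lemma phase_invariant_logsq: "phase_invariant logsq"
  by (simp add: phase_invariant_def logsq_def norm_mult)

lemma admissible_real_form_nonneg:
  fixes Phi :: "complex^'i::finite \<Rightarrow> real" and \<rho> :: "'i \<Rightarrow> real"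
  assumes idx: "bij_betw idx {..<N} UNIV" and j: "j < N" and adm: "admissible a idx N Phi"
    and z: "z $ idx j = 1" and \<rho>: "\<rho> (idx j) = 0"
  shows "0 \<le> (\<Sum>q\<in>UNIV. \<Sum>r\<in>UNIV. \<rho> q * \<rho> r * Re (of_real a * wirt2 logsq r q z + wirt2 Phi r q z))"
proof -
  define H where "H r q = of_real a * wirt2 logsq r q z + wirt2 Phi r q z" for r q
  define T where "T r q = \<rho> r * \<rho> q * Re (H r q)" for r q
  define v where "v l = complex_of_real (\<rho> (idx l))" for l
  define I where "I = {..<N} - {j}"
  have sum_I: "(\<Sum>l\<in>I. g l) = (\<Sum>l<N. g l)" if "g j = 0" for g :: "nat \<Rightarrow> real"
  proof -
    have "(\<Sum>l<N. g l) = g j + (\<Sum>l\<in>I. g l)"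
      unfolding I_def by (rule sum.remove) (use j in auto)
    with that show ?thesis by simp
  qed
  have "pos_def_herm I (\<lambda>l m. H (idx l) (idx m))"
    using adm j z unfolding admissible_def H_def I_def by blast
  then have "0 \<le> Re (\<Sum>l\<in>I. \<Sum>m\<in>I. H (idx l) (idx m) * v l * cnj (v m))"
  proof (cases "\<exists>l\<in>I. v l \<noteq> 0")
    case True
    with \<open>pos_def_herm I _\<close> show ?thesis
      unfolding pos_def_herm_def by (blast intro: less_imp_le)
  qed simp
  also have "\<dots> = (\<Sum>l\<in>I. \<Sum>m\<in>I. T (idx l) (idx m))"
    by (simp add: Re_sum T_def v_def mult_ac)
  also have "\<dots> = (\<Sum>l<N. \<Sum>m<N. T (idx l) (idx m))"
    by (simp add: sum_I T_def \<rho>)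
  also have "\<dots> = (\<Sum>l<N. \<Sum>q\<in>UNIV. T (idx l) q)"
    by (simp only: sum.reindex_bij_betw[OF idx])
  also have "\<dots> = (\<Sum>r\<in>UNIV. \<Sum>q\<in>UNIV. T r q)"
    by (rule sum.reindex_bij_betw[OF idx])
  also have "\<dots> = (\<Sum>q\<in>UNIV. \<Sum>r\<in>UNIV. T r q)"
    by (rule sum.swap)
  finally show ?thesis by (simp add: T_def H_def mult_ac)
qed

lemma admissible_radial_path_mono:
  fixes Phi :: "complex^'i::finite \<Rightarrow> real"
  assumes idx: "bij_betw idx {..<N} UNIV" and j: "j < N" and adm: "admissible a idx N Phi"
    and Phi: "twice_differentiable_on Phi (UNIV - {0})" "phase_invariant Phi"
    and \<beta>: "\<beta> (idx j) = 1" and c: "c (idx j) = 0"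
    and crit: "frechet_derivative Phi (at (radial_path \<beta> c 0)) (radial_path (\<lambda>q. c q * \<beta> q) c 0)
             + a * frechet_derivative logsq (at (radial_path \<beta> c 0)) (radial_path (\<lambda>q. c q * \<beta> q) c 0) = 0"
    and s: "0 \<le> s"
  shows "Phi (radial_path \<beta> c 0) + a * logsq (radial_path \<beta> c 0)
       \<le> Phi (radial_path \<beta> c s) + a * logsq (radial_path \<beta> c s)"
proof -
  define W where "W = radial_path \<beta> c"
  define V where "V = radial_path (\<lambda>q. c q * \<beta> q) c"
  define \<rho> where "\<rho> t q = exp (t * c q) * (c q * \<beta> q)" for t q
  define g' where "g' t = frechet_derivative Phi (at (W t)) (V t) + a * frechet_derivative logsq (at (W t)) (V t)" for t
  define L where "L f t = 4 * (\<Sum>q\<in>UNIV. \<Sum>r\<in>UNIV. \<rho> t q * \<rho> t r * Re (wirt2 f r q (W t)))" for f t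
  have \<beta>': "\<exists>q. \<beta> q \<noteq> 0" using \<beta> zero_neq_one by metis
  have nz: "W t \<noteq> 0" for t
    using \<beta>' by (simp add: W_def radial_path_eq_0_iff)
  have g: "((\<lambda>t. Phi (W t) + a * logsq (W t)) has_real_derivative g' t) (at t)" for t
    using Phi(1) twice_differentiable_logsq nz unfolding W_def V_def g'_def
    by (intro DERIV_add DERIV_cmult has_real_derivative_comp_curve has_vector_derivative_radial_path)
       (auto simp: twice_differentiable_on_def)
  have g': "(g' has_real_derivative L Phi t + a * L logsq t) (at t)" for t
    unfolding g'_def L_def \<rho>_def W_def V_def
    by (intro DERIV_add DERIV_cmult radial_path_second_derivative Phi twice_differentiable_logsq
        phase_invariant_logsq \<beta>')
  have g'': "0 \<le> L Phi t + a * L logsq t" for t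
  proof -
    have "0 \<le> (\<Sum>q\<in>UNIV. \<Sum>r\<in>UNIV. \<rho> t q * \<rho> t r
        * Re (of_real a * wirt2 logsq r q (W t) + wirt2 Phi r q (W t)))"
      by (rule admissible_real_form_nonneg[OF idx j adm]) (simp_all add: W_def radial_path_def \<rho>_def \<beta> c)
    moreover have "L Phi t + a * L logsq t = 4 * (\<Sum>q\<in>UNIV. \<Sum>r\<in>UNIV. \<rho> t q * \<rho> t r
        * Re (of_real a * wirt2 logsq r q (W t) + wirt2 Phi r q (W t)))"
      by (simp add: L_def sum.distrib sum_distrib_left algebra_simps)
    ultimately show ?thesis by simp
  qed
  have "g' 0 = 0"
    using crit by (simp add: g'_def W_def V_def)
  from nondecreasing_from_critical_point[OF g g' g'' this s] show ?thesis
    by (simp add: W_def)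
qed

lemma psi_radial_path:
  fixes \<beta> c :: "'i::finite \<Rightarrow> real"
  assumes \<beta>: "\<And>q. 0 < \<beta> q" and c: "(\<Sum>q\<in>UNIV. c q) = 0"
  shows "psi a (radial_path \<beta> c s) = 2 * a / CARD('i) * ln (\<Prod>q\<in>UNIV. \<beta> q) - a * logsq (radial_path \<beta> c s)"
proof -
  define W where "W = radial_path \<beta> c s"
  have "(\<Prod>q\<in>UNIV. cmod (W $ q)) = (\<Prod>q\<in>UNIV. exp (s * c q) * \<beta> q)"
    using \<beta> by (intro prod.cong) (simp_all add: W_def radial_path_def norm_mult abs_of_pos)
  also have "\<dots> = exp (s * (\<Sum>q\<in>UNIV. c q)) * (\<Prod>q\<in>UNIV. \<beta> q)"
    by (simp add: prod.distrib exp_sum sum_distrib_left)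
  finally have prod: "(\<Prod>q\<in>UNIV. cmod (W $ q)) = (\<Prod>q\<in>UNIV. \<beta> q)"
    using c by simp
  have "0 < (\<Prod>q\<in>UNIV. \<beta> q)"
    using \<beta> by (simp add: prod_pos less_imp_le)
  moreover have "0 < (\<Sum>q\<in>UNIV. (cmod (W $ q))\<^sup>2)"
  proof -
    have "W \<noteq> 0"
      using \<beta> by (simp add: W_def radial_path_eq_0_iff) (metis less_irrefl)
    moreover have "(\<Sum>q\<in>UNIV. (cmod (W $ q))\<^sup>2) = W \<bullet> W"
      by (simp add: inner_vec_def power2_norm_eq_inner)
    ultimately show ?thesis by simp
  qed
  ultimately show ?thesis
    using \<beta> by (simp add: psi_def logsq_def prod ln_div ln_powr W_def[symmetric] less_imp_neq[symmetric])
qed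

lemma admissible_radial_path_phi_minus_psi_mono:
  fixes Phi :: "complex^'i::finite \<Rightarrow> real"
  assumes idx: "bij_betw idx {..<N} UNIV" and j: "j < N" and adm: "admissible a idx N Phi"
    and Phi: "twice_differentiable_on Phi (UNIV - {0})" "phase_invariant Phi"
    and \<beta>: "\<beta> (idx j) = 1" "\<And>q. 0 < \<beta> q" and c: "c (idx j) = 0" "(\<Sum>q\<in>UNIV. c q) = 0"
    and crit: "frechet_derivative Phi (at (radial_path \<beta> c 0)) (radial_path (\<lambda>q. c q * \<beta> q) c 0)
             + a * frechet_derivative logsq (at (radial_path \<beta> c 0)) (radial_path (\<lambda>q. c q * \<beta> q) c 0) = 0"
  shows "Phi (radial_path \<beta> c 0) - psi a (radial_path \<beta> c 0)
       \<le> Phi (radial_path \<beta> c 1) - psi a (radial_path \<beta> c 1)"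
  using admissible_radial_path_mono[OF idx j adm Phi \<beta>(1) c(1) crit zero_le_one]
    psi_radial_path[OF \<beta>(2) c(2), where a=a and s=0] psi_radial_path[OF \<beta>(2) c(2), where a=a and s=1]
  by (simp del: radial_path_0)

section \<open>Coordinates and block symmetry\<close>

lemma the_inv_into_idx:
  assumes "bij_betw idx {..<N} (UNIV :: 'i set)"
  shows "the_inv_into {..<N} idx q < N" "idx (the_inv_into {..<N} idx q) = q"
    and "p < N \<Longrightarrow> the_inv_into {..<N} idx (idx p) = p"
  using assms bij_betw_the_inv_into[OF assms] f_the_inv_into_f_bij_betw[OF assms]
  by (auto simp: bij_betw_def the_inv_into_f_f)

lemma mk_point_cong:
  assumes "bij_betw idx {..<N} (UNIV :: 'i::finite set)" and "\<And>p. p < N \<Longrightarrow> h p = h' p"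
  shows "(mk_point idx N h :: complex^'i) = mk_point idx N h'"
  using assms by (simp add: mk_point_def vec_eq_iff the_inv_into_idx)

lemma perm_pt_mk_point:
  assumes idx: "bij_betw idx {..<N} (UNIV :: 'i::finite set)" and \<sigma>: "bij_betw \<sigma> {..<N} {..<N}"
  shows "perm_pt idx N \<sigma> (mk_point idx N h :: complex^'i) = mk_point idx N (h \<circ> \<sigma>)"
  using idx bij_betw_apply[OF \<sigma>] by (simp add: vec_eq_iff perm_pt_def mk_point_def coord_def the_inv_into_idx)

lemma logsq_perm_pt:
  assumes idx: "bij_betw idx {..<N} (UNIV :: 'i::finite set)" and \<sigma>: "bij_betw \<sigma> {..<N} {..<N}"
  shows "logsq (perm_pt idx N \<sigma> z) = logsq (z :: complex^'i)"
proof -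
  have "(\<Sum>q\<in>UNIV. (cmod (z $ idx (\<sigma> (the_inv_into {..<N} idx q))))\<^sup>2) = (\<Sum>p<N. (cmod (z $ idx (\<sigma> p)))\<^sup>2)"
    by (rule sum.reindex_bij_betw[OF bij_betw_the_inv_into[OF idx]])
  also have "\<dots> = (\<Sum>p<N. (cmod (z $ idx p))\<^sup>2)"
    by (rule sum.reindex_bij_betw[OF \<sigma>, of "\<lambda>p. (cmod (z $ idx p))\<^sup>2"])
  also have "\<dots> = (\<Sum>q\<in>UNIV. (cmod (z $ q))\<^sup>2)"
    by (rule sum.reindex_bij_betw[OF idx])
  finally show ?thesis
    by (simp add: logsq_def perm_pt_def mk_point_def coord_def)
qed

lemma phase_invariant_if_phase_pt_invariant:
  assumes idx: "bij_betw idx {..<N} (UNIV::'i::finite set)"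
    and inv: "\<And>p \<theta> z. p < N \<Longrightarrow> f (phase_pt idx p \<theta> z) = f z"
  shows "phase_invariant f"
proof -
  have "f (\<chi> q. if q \<in> S then cis (\<theta> q) * z$q else z$q) = f z" if "finite S" for S \<theta> z
    using that
  proof (induction S rule: finite_induct)
    case (insert x S)
    define p where "p = the_inv_into {..<N} idx x"
    have p: "p < N" "idx p = x"
      using idx the_inv_into_into[of idx "{..<N}" x "{..<N}"] f_the_inv_into_f_bij_betw[OF idx]
      by (auto simp: p_def bij_betw_def)
    have "(\<chi> q. if q \<in> insert x S then cis (\<theta> q) * z$q else z$q)
        = phase_pt idx p (\<theta> x) (\<chi> q. if q \<in> S then cis (\<theta> q) * z$q else z$q)"
      using insert.hyps(2) p(2) by (auto simp: vec_eq_iff phase_pt_def)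
    then show ?case using inv[OF p(1)] insert.IH by simp
  qed simp
  from this[of UNIV] show ?thesis by (simp add: phase_invariant_def)
qed

lemma swap_idx_swap_idx [simp]: "swap_idx i j (swap_idx i j x) = x"
  by (simp add: swap_idx_def)

lemma block_swap_eq: "block_swap n i j p = swap_idx i j (p div n) * n + p mod n"
  by (simp add: block_swap_def swap_idx_def)

lemma block_swap_div: "0 < n \<Longrightarrow> block_swap n i j p div n = swap_idx i j (p div n)"
  by (simp add: block_swap_eq)

lemma bij_betw_block_swap:
  assumes n: "0 < n" and "i < k" "j < k"
  shows "bij_betw (block_swap n i j) {..<k*n} {..<k*n}"
proof (rule bij_betw_byWitness[where f'="block_swap n i j"])
  have "block_swap n i j p < k * n" if "p < k * n" for p
  proof -
    have "swap_idx i j (p div n) < k"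
      using that assms by (auto simp: swap_idx_def less_mult_imp_div_less)
    then have "swap_idx i j (p div n) * n + p mod n < (swap_idx i j (p div n) + 1) * n"
      using n by simp
    also have "\<dots> \<le> k * n"
      using \<open>swap_idx i j (p div n) < k\<close> by (intro mult_right_mono) auto
    finally show ?thesis by (simp add: block_swap_eq)
  qed
  then show "block_swap n i j ` {..<k*n} \<subseteq> {..<k*n}" "block_swap n i j ` {..<k*n} \<subseteq> {..<k*n}"
    by auto
  have "block_swap n i j (block_swap n i j p) = p" for p
  proof -
    have "block_swap n i j p div n = swap_idx i j (p div n)" "block_swap n i j p mod n = p mod n"
      using n by (simp_all add: block_swap_eq)
    then show ?thesis
      by (simp only: block_swap_eq[of n i j "block_swap n i j p"] swap_idx_swap_idx div_mult_mod_eq)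
  qed
  then show "\<forall>p\<in>{..<k*n}. block_swap n i j (block_swap n i j p) = p"
    "\<forall>p\<in>{..<k*n}. block_swap n i j (block_swap n i j p) = p"
    by simp_all
qed

lemma block_swap_first_block:
  assumes n: "0 < n" and ij: "0 < i" "0 < j"
  shows "block_swap n i j p < n \<longleftrightarrow> p < n" and "block_swap n i j p = 0 \<longleftrightarrow> p = 0"
proof -
  have swap: "swap_idx i j x = 0 \<longleftrightarrow> x = 0" for x
    using ij by (auto simp: swap_idx_def)
  have lt: "x * n + p mod n < n \<longleftrightarrow> x = 0" for x
    using n by (cases x) auto
  show "block_swap n i j p < n \<longleftrightarrow> p < n"
    unfolding block_swap_eq lt swap using n by (simp add: div_eq_0_iff)
  show "block_swap n i j p = 0 \<longleftrightarrow> p = 0"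
    unfolding block_swap_eq using n swap[of "p div n"] by (auto simp: div_eq_0_iff)
qed

lemma frechet_derivative_radial_path_zero_if_symmetric:
  fixes f :: "complex^'i::finite \<Rightarrow> real" and E :: "'a \<Rightarrow> 'i \<Rightarrow> real"
  assumes f: "f differentiable (at (radial_path \<beta> c 0))"
    and symm: "\<And>i s. i \<in> A \<Longrightarrow> f (radial_path \<beta> (E i) s) = f (radial_path \<beta> (E j) s)"
    and c: "\<And>q. c q = (\<Sum>i\<in>A. d i * E i q)" and d: "(\<Sum>i\<in>A. d i) = 0"
  shows "frechet_derivative f (at (radial_path \<beta> c 0)) (radial_path (\<lambda>q. c q * \<beta> q) c 0) = 0"
proof -
  define L where "L = frechet_derivative f (at (radial_path \<beta> c 0))"
  define u where "u i = radial_path (\<lambda>q. E i q * \<beta> q) (E i) 0" for i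
  have der: "((\<lambda>s. f (radial_path \<beta> (E i) s)) has_real_derivative L (u i)) (at 0)" for i
  proof -
    have "f differentiable (at (radial_path \<beta> (E i) 0))"
      using f by simp
    from has_real_derivative_comp_curve[OF this has_vector_derivative_radial_path] show ?thesis
      by (simp add: L_def u_def)
  qed
  have u: "L (u i) = L (u j)" if "i \<in> A" for i
    using der[of i] der[of j] symm[OF that] DERIV_unique by simp
  have "radial_path (\<lambda>q. c q * \<beta> q) c 0 = (\<Sum>i\<in>A. d i *\<^sub>R u i)"
    unfolding vec_eq_iff sum_component vector_scaleR_component
    by (simp add: u_def c sum_distrib_right scaleR_conv_of_real mult.assoc)
  then have "L (radial_path (\<lambda>q. c q * \<beta> q) c 0) = (\<Sum>i\<in>A. d i * L (u i))"
    using linear_frechet_derivative[OF f] by (simp add: L_def real_vector.linear_sum linear_cmul)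
  also have "\<dots> = (\<Sum>i\<in>A. d i) * L (u j)"
    by (simp add: u sum_distrib_right)
  finally show ?thesis by (simp add: d L_def)
qed

lemma block_symmetric_frechet_derivative_zero:
  fixes f :: "complex^'i::finite \<Rightarrow> real" and b d :: "nat \<Rightarrow> real"
  assumes idx: "bij_betw idx {..<k*n} UNIV" and n: "0 < n"
    and f: "f differentiable (at (mk_point idx (k*n) (\<lambda>p. complex_of_real (b p))))"
    and f_inv: "\<And>i z. i \<in> {1..<k} \<Longrightarrow> f (perm_pt idx (k*n) (block_swap n 1 i) z) = f z"
    and b: "\<And>i p. i \<in> {1..<k} \<Longrightarrow> p < k*n \<Longrightarrow> b (block_swap n 1 i p) = b p"
    and d: "(\<Sum>i\<in>{1..<k}. d i) = 0"
  shows "frechet_derivative f (at (mk_point idx (k*n) (\<lambda>p. complex_of_real (b p))))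
           (mk_point idx (k*n) (\<lambda>p. complex_of_real ((if p < n then 0 else d (p div n)) * b p))) = 0"
proof -
  define \<iota> where "\<iota> = the_inv_into {..<k*n} idx"
  define E where "E i q = (if \<iota> q div n = i then 1 else 0 :: real)" for i q
  define c where "c q = (if \<iota> q < n then 0 else d (\<iota> q div n))" for q
  have mk: "mk_point idx (k*n) h = (\<chi> q. h (\<iota> q))" for h :: "nat \<Rightarrow> complex"
    by (simp add: mk_point_def \<iota>_def)
  have "frechet_derivative f (at (radial_path (b \<circ> \<iota>) c 0)) (radial_path (\<lambda>q. c q * (b \<circ> \<iota>) q) c 0) = 0"
  proof (rule frechet_derivative_radial_path_zero_if_symmetric[where A="{1..<k}" and E=E and j=1 and d=d])
    show "f differentiable (at (radial_path (b \<circ> \<iota>) c 0))"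
      using f by (simp add: mk)
    fix i s assume i: "i \<in> {1..<k}"
    define h where "h j p = complex_of_real (exp (s * (if p div n = j then 1 else 0)) * b p)" for j p
    have "perm_pt idx (k*n) (block_swap n 1 i) (mk_point idx (k*n) (h i)) = mk_point idx (k*n) (h i \<circ> block_swap n 1 i)"
      using i by (intro perm_pt_mk_point idx bij_betw_block_swap n) auto
    also have "\<dots> = mk_point idx (k*n) (h 1)"
      using n i b by (intro mk_point_cong idx) (auto simp: h_def block_swap_div swap_idx_def)
    finally have "f (mk_point idx (k*n) (h i)) = f (mk_point idx (k*n) (h 1))"
      using f_inv[OF i] by metis
    then show "f (radial_path (b \<circ> \<iota>) (E i) s) = f (radial_path (b \<circ> \<iota>) (E 1) s)"
      by (simp add: mk radial_path_def E_def h_def)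
  next
    fix q
    have "\<iota> q < k * n"
      using the_inv_into_idx(1)[OF idx] by (simp add: \<iota>_def)
    then have "\<iota> q div n < k"
      by (simp add: less_mult_imp_div_less)
    moreover have "1 \<le> \<iota> q div n \<longleftrightarrow> \<not> \<iota> q < n"
      using n by (auto simp: div_greater_zero_iff Suc_le_eq)
    ultimately show "c q = (\<Sum>i\<in>{1..<k}. d i * E i q)"
      by (auto simp: c_def E_def if_distrib[of "(*) _"] sum.delta' cong: if_cong)
  qed (rule d)
  then show ?thesis
    by (simp add: mk c_def)
qed

lemma block_deformation_mono:
  fixes Phi :: "complex^'i::finite \<Rightarrow> real" and b d :: "nat \<Rightarrow> real"
  assumes idx: "bij_betw idx {..<k*n} UNIV" and n: "0 < n" and k: "0 < k"
    and adm: "admissible a idx (k*n) Phi" and smooth: "smooth_on (UNIV - {0}) Phi"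
    and inv_block: "\<And>i z. i \<in> {1..<k} \<Longrightarrow> Phi (perm_pt idx (k*n) (block_swap n 1 i) z) = Phi z"
    and inv_phase: "\<And>p \<theta> z. p < k*n \<Longrightarrow> Phi (phase_pt idx p \<theta> z) = Phi z"
    and b_pos: "\<And>p. p < k*n \<Longrightarrow> 0 < b p" and b0: "b 0 = 1"
    and b_symm: "\<And>i p. i \<in> {1..<k} \<Longrightarrow> p < k*n \<Longrightarrow> b (block_swap n 1 i p) = b p"
    and d: "(\<Sum>i\<in>{1..<k}. d i) = 0"
  defines "P \<equiv> \<lambda>e. mk_point idx (k*n) (\<lambda>p. complex_of_real (exp (e p) * b p))"
  shows "Phi (P (\<lambda>_. 0)) - psi a (P (\<lambda>_. 0))
       \<le> Phi (P (\<lambda>p. if p < n then 0 else d (p div n))) - psi a (P (\<lambda>p. if p < n then 0 else d (p div n)))"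
proof -
  define \<iota> where "\<iota> = the_inv_into {..<k*n} idx"
  define e where "e p = (if p < n then 0 else d (p div n))" for p
  define \<beta> where "\<beta> q = b (\<iota> q)" for q
  define c where "c q = e (\<iota> q)" for q
  have \<iota>: "\<iota> q < k*n" "\<iota> (idx 0) = 0" for q
    using the_inv_into_idx[OF idx] k n by (simp_all add: \<iota>_def)
  have W: "radial_path \<beta> c s = P (\<lambda>p. s * e p)" for s
    by (simp add: radial_path_def P_def mk_point_def \<beta>_def c_def \<iota>_def)
  have crit: "frechet_derivative f (at (radial_path \<beta> c 0)) (radial_path (\<lambda>q. c q * \<beta> q) c 0) = 0"
    if f: "twice_differentiable_on f (UNIV - {0})"
      and f_inv: "\<And>i z. i \<in> {1..<k} \<Longrightarrow> f (perm_pt idx (k*n) (block_swap n 1 i) z) = f z" for f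
  proof -
    have "radial_path \<beta> c 0 \<noteq> 0"
      using b0 \<iota>(2) radial_path_eq_0_iff[of \<beta> c 0]
      by (auto simp del: radial_path_0 simp: \<beta>_def dest: spec[of _ "idx 0"])
    with f have "f differentiable (at (mk_point idx (k*n) (\<lambda>p. complex_of_real (b p))))"
      by (simp add: twice_differentiable_on_def mk_point_def \<beta>_def \<iota>_def)
    from block_symmetric_frechet_derivative_zero[OF idx n this f_inv b_symm d] show ?thesis
      by (simp add: radial_path_def mk_point_def \<beta>_def c_def \<iota>_def e_def)
  qed
  have "(\<Sum>q\<in>UNIV. c q) = (\<Sum>p<k*n. e p)"
    unfolding c_def \<iota>_def by (rule sum.reindex_bij_betw[OF bij_betw_the_inv_into[OF idx]])
  then have "(\<Sum>q\<in>UNIV. c q) = 0"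
    using sum_outside_first_block[OF n k, of d] d by (simp add: e_def)
  moreover have "0 < \<beta> q" for q
    using b_pos \<iota>(1) by (simp add: \<beta>_def)
  ultimately have "Phi (radial_path \<beta> c 0) - psi a (radial_path \<beta> c 0)
      \<le> Phi (radial_path \<beta> c 1) - psi a (radial_path \<beta> c 1)"
    using k n b0 \<iota>(2) crit[OF smooth_on_imp_twice_differentiable_on[OF smooth] inv_block]
      crit[OF twice_differentiable_logsq logsq_perm_pt[OF idx bij_betw_block_swap[OF n]]]
    by (intro admissible_radial_path_phi_minus_psi_mono[OF idx _ adm smooth_on_imp_twice_differentiable_on[OF smooth]
          phase_invariant_if_phase_pt_invariant[OF idx inv_phase], where j=0]) (auto simp: \<beta>_def c_def e_def)
  then show ?thesis
    unfolding W e_def by simp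
qed

theorem lemma2:
  fixes k n :: nat and a :: real and idx :: "nat \<Rightarrow> 'i::finite"
    and Phi :: "complex^'i \<Rightarrow> real" and \<zeta> :: "nat \<Rightarrow> real"
  assumes k2: "k \<ge> 2" and n1: "n \<ge> 1" and apos: "a > 0"
    and idx: "bij_betw idx {..<k*n} UNIV"
    and proj: "\<And>c z. c \<noteq> 0 \<Longrightarrow> Phi (\<chi> q. c * z $ q) = Phi z"
    and smooth: "smooth_on (UNIV - {0}) Phi"
    and adm: "admissible a idx (k*n) Phi"
    and inv_block: "\<And>i j z. i < k \<Longrightarrow> j < k \<Longrightarrow> Phi (perm_pt idx (k*n) (block_swap n i j) z) = Phi z"
    and inv_phase: "\<And>p \<theta> z. p < k*n \<Longrightarrow> Phi (phase_pt idx p \<theta> z) = Phi z"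
    and inv_transp: "\<And>p q z. p < k*n \<Longrightarrow> q < k*n \<Longrightarrow> p div n = q div n \<Longrightarrow>
                       Phi (perm_pt idx (k*n) (swap_idx p q) z) = Phi z"
    and zeta: "\<And>i. i < k \<Longrightarrow> 0 < \<zeta> i \<and> \<zeta> i \<le> 1"
  shows "(let \<gamma> = (\<Prod>i\<in>{1..<k}. \<zeta> i) powr (1 / real (k - 1));
              P1 = mk_point idx (k*n) (\<lambda>p. if p = 0 then 1 else if p < n then complex_of_real (\<zeta> 0)
                                            else complex_of_real (\<zeta> (p div n)));
              P2 = mk_point idx (k*n) (\<lambda>p. if p = 0 then 1 else if p < n then complex_of_real (\<zeta> 0)
                                            else complex_of_real \<gamma>)
          in Phi P1 - psi a P1 \<ge> Phi P2 - psi a P2)"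
proof -
  define \<gamma> where "\<gamma> = (\<Prod>i\<in>{1..<k}. \<zeta> i) powr (1 / real (k - 1))"
  define b where "b p = (if p = 0 then 1 else if p < n then \<zeta> 0 else \<gamma>)" for p
  define d where "d i = ln (\<zeta> i) - ln \<gamma>" for i
  have n: "0 < n" and k: "0 < k"
    using n1 k2 by auto
  have \<zeta>: "0 < \<zeta> i" if "i < k" for i
    using zeta[OF that] by simp
  have \<gamma>: "0 < \<gamma>"
    using \<zeta> by (auto simp: \<gamma>_def less_imp_neq[symmetric])
  have "(\<Sum>i\<in>{1..<k}. d i) = 0"
    using sum_ln_minus_ln_geometric_mean[of "{1..<k}" \<zeta>] k2 \<zeta> by (simp add: d_def \<gamma>_def)
  moreover have "b (block_swap n 1 i p) = b p" if "i \<in> {1..<k}" for i p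
    using n that by (simp add: b_def block_swap_first_block)
  ultimately have "Phi (mk_point idx (k*n) (\<lambda>p. complex_of_real (exp 0 * b p)))
      - psi a (mk_point idx (k*n) (\<lambda>p. complex_of_real (exp 0 * b p)))
    \<le> Phi (mk_point idx (k*n) (\<lambda>p. complex_of_real (exp (if p < n then 0 else d (p div n)) * b p)))
      - psi a (mk_point idx (k*n) (\<lambda>p. complex_of_real (exp (if p < n then 0 else d (p div n)) * b p)))"
    using \<zeta>[OF k] \<gamma>
    by (intro block_deformation_mono idx n k adm smooth inv_block inv_phase) (auto simp: b_def)
  moreover have "mk_point idx (k*n) (\<lambda>p. complex_of_real (exp (if p < n then 0 else d (p div n)) * b p))
      = mk_point idx (k*n) (\<lambda>p. if p = 0 then 1 else if p < n then complex_of_real (\<zeta> 0)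
                                   else complex_of_real (\<zeta> (p div n)))"
    using n \<gamma> \<zeta> by (intro mk_point_cong idx) (auto simp: b_def d_def exp_diff less_mult_imp_div_less)
  moreover have "mk_point idx (k*n) (\<lambda>p. complex_of_real (exp 0 * b p))
      = mk_point idx (k*n) (\<lambda>p. if p = 0 then 1 else if p < n then complex_of_real (\<zeta> 0)
                                   else complex_of_real \<gamma>)"
    by (intro mk_point_cong idx) (simp add: b_def)
  ultimately show ?thesis
    unfolding Let_def \<gamma>_def[symmetric] by simp
qed

end
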